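(* Let $P$ be a generic regular hexagon in $\mathbb{R}^3$. For every support system $u_1,\ldots,u_6$ of $P$, the derived hexagon $P'$, with edge vectors $v'_1=u_2-u_1,\ v'_2=u_3-u_2,\ldots,\ v'_5=u_6-u_5,\ v'_6=u_1-u_6$ and determinants $\Delta'_i=(v'_i,[v'_{i+1},v'_{i+2}])$, satisfies $\Delta'_1=\Delta'_4$, $\Delta'_2=\Delta'_5$, $\Delta'_3=\Delta'_6$; hence every generic derivative of $P$ is strongly-regular. Moreover, all (generic) derivatives of $P$, over all support systems of $P$, have the same type.
   Context: Indices are cyclic mod $6$; $(\cdot,\cdot)$ and $[\cdot,\cdot]$ are the dot and cross products. For a closed hexagon $A_1\ldots A_6$ put $v_1=\overline{A_1A_2},\ldots,v_6=\overline{A_6A_1}$ and $\Delta_i=(v_i,[v_{i+1},v_{i+2}])$. The hexagon is generic if any two consecutive $v_i,v_{i+1}$ are not collinear and any three consecutive $v_i,v_{i+1},v_{i+2}$ are not coplanar. A support system is a tuple $u_1,\ldots,u_6$ with $[u_i,u_{i+1}]=v_{i+1}$ for all $i$; a generic hexagon is regular if it has a support system. The derived hexagon (derivative) for a support system is $B_1\ldots B_6$ with $\overline{OB_i}=u_i$ for a fixed origin $O$. A regular hexagon is strongly-regular if $\Delta_1=\Delta_4$, $\Delta_2=\Delta_5$, $\Delta_3=\Delta_6$; its type is the cyclic ratio $\Delta_1:\Delta_2:\Delta_3$, i.e. the triple $(\Delta_1,\Delta_2,\Delta_3)$ up to multiplication by a nonzero scalar and cyclic permutation. *)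

theory Defs
  imports "HOL-Analysis.Analysis" "HOL-Analysis.Cross3"
begin

text \<open>Hexagons in R^3 are given by vertex functions A :: nat => real^3; only
  A 0, ..., A 5 matter (0-based indexing, vertex A_{i+1} of the paper is A i),
  and all indices are read mod 6.\<close>

definition edge :: "(nat \<Rightarrow> real^3) \<Rightarrow> nat \<Rightarrow> real^3" where
  "edge A i = A (Suc i mod 6) - A (i mod 6)"

definition Delta :: "(nat \<Rightarrow> real^3) \<Rightarrow> nat \<Rightarrow> real" where
  "Delta A i = edge A i \<bullet> cross3 (edge A (i + 1)) (edge A (i + 2))"

definition generic_hex :: "(nat \<Rightarrow> real^3) \<Rightarrow> bool" where
  "generic_hex A \<longleftrightarrow>
     (\<forall>i. \<not> collinear {0, edge A i, edge A (i + 1)}) \<and>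
     (\<forall>i. \<not> coplanar {0, edge A i, edge A (i + 1), edge A (i + 2)})"

definition support_system :: "(nat \<Rightarrow> real^3) \<Rightarrow> (nat \<Rightarrow> real^3) \<Rightarrow> bool" where
  "support_system A u \<longleftrightarrow>
     (\<forall>i. cross3 (u (i mod 6)) (u (Suc i mod 6)) = edge A (Suc i))"

definition regular_hex :: "(nat \<Rightarrow> real^3) \<Rightarrow> bool" where
  "regular_hex A \<longleftrightarrow> generic_hex A \<and> (\<exists>u. support_system A u)"

text \<open>The derived hexagon for the support system u has vertices B_i = O + u_i;
  taking O = 0, it is the vertex function u itself.\<close>
definition derived_hex :: "(nat \<Rightarrow> real^3) \<Rightarrow> (nat \<Rightarrow> real^3)" where
  "derived_hex u = u"

definition strongly_regular :: "(nat \<Rightarrow> real^3) \<Rightarrow> bool" where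
  "strongly_regular A \<longleftrightarrow> regular_hex A \<and>
     Delta A 0 = Delta A 3 \<and> Delta A 1 = Delta A 4 \<and> Delta A 2 = Delta A 5"

definition hex_triple :: "(nat \<Rightarrow> real^3) \<Rightarrow> real \<times> real \<times> real" where
  "hex_triple A = (Delta A 0, Delta A 1, Delta A 2)"

definition same_type :: "real \<times> real \<times> real \<Rightarrow> real \<times> real \<times> real \<Rightarrow> bool" where
  "same_type t s \<longleftrightarrow> (case t of (a1, a2, a3) \<Rightarrow> case s of (b1, b2, b3) \<Rightarrow>
     (\<exists>c. c \<noteq> 0 \<and>
        ((b1, b2, b3) = (c * a1, c * a2, c * a3) \<or>
         (b1, b2, b3) = (c * a2, c * a3, c * a1) \<or>
         (b1, b2, b3) = (c * a3, c * a1, c * a2))))"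

end

theory Submission
  imports Defs
begin

(* A support system satisfies [u_i, u_{i+1}] = v_{i+1}; summing over i and using that P is
   closed, the derived hexagon has zero vector area sum [u_i, u_{i+1}].  For any hexagon with
   vertices u_i, Delta'_1 - Delta'_4 = (u_4 - u_1, sum [u_i, u_{i+1}]), so opposite determinants
   of a derivative agree.  Conversely, a generic hexagon with Delta_i = Delta_{i+3} is regular:
   since [[a,b],[b,c]] = (a,[b,c]) b, the vectors m_i [v_i, v_{i+1}] form a support system as
   soon as m_i m_{i+1} Delta_i = 1 for all i, and these six equations are solvable because
   Delta_i = Delta_{i+3}.  Finally, u_i is orthogonal to v_i and v_{i+1}, so two support systems
   of a generic hexagon differ by u_i -> s u_i (i even), u_i -> t u_i (i odd) with s t = 1.
   Writing Delta'_i = P_i - N_i, this rescaling turns Delta'_i into t P_i - s N_i or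
   s P_i - t N_i, and the vanishing vector area gives P_i P_{i+1} = N_i N_{i+1}, which is
   exactly what preserves the ratios Delta'_1 : Delta'_2 : Delta'_3. *)

definition chain_det :: "real^3 \<Rightarrow> real^3 \<Rightarrow> real^3 \<Rightarrow> real^3 \<Rightarrow> real" where
  "chain_det a b c d = (b - a) \<bullet> cross3 (c - b) (d - c)"

(* twice the vector area of the closed polygon a b c d e f *)
definition hex_area :: "real^3 \<Rightarrow> real^3 \<Rightarrow> real^3 \<Rightarrow> real^3 \<Rightarrow> real^3 \<Rightarrow> real^3 \<Rightarrow> real^3" where
  "hex_area a b c d e f =
     cross3 a b + cross3 b c + cross3 c d + cross3 d e + cross3 e f + cross3 f a"

lemma hex_area_rotate: "hex_area a b c d e f = hex_area b c d e f a"
  by (simp add: hex_area_def add_ac)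

lemma chain_det_opposite:
  "chain_det a b c d - chain_det d e f a = (d - a) \<bullet> hex_area a b c d e f"
  by (simp add: chain_det_def hex_area_def cross3_simps)

lemma chain_det_opposite_eq:
  "hex_area a b c d e f = 0 \<Longrightarrow> chain_det a b c d = chain_det d e f a"
  using chain_det_opposite[of a b c d e f] by simp

lemma chain_det_alternating_scale:
  assumes "s * t = 1"
  shows "chain_det (s *\<^sub>R a) (t *\<^sub>R b) (s *\<^sub>R c) (t *\<^sub>R d)
     = t * (b \<bullet> cross3 (c - a) d) - s * (a \<bullet> cross3 c (d - b))"
  using assms by (simp add: chain_det_def cross3_def inner_vec_def sum_3 vector_def; algebra)

lemma chain_det_parts_product:
  "(b \<bullet> cross3 (c - a) d) * (c \<bullet> cross3 (d - b) e)
     - (a \<bullet> cross3 c (d - b)) * (b \<bullet> cross3 d (e - c))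
     = (b \<bullet> cross3 c d) * (hex_area a b c d e f \<bullet> (e - a))"
  by (simp add: hex_area_def cross3_def vector_def inner_vec_def sum_3; algebra)

lemma chain_det_alternating_scale_ratio:
  assumes area: "hex_area a b c d e f = 0" and st: "s * t = 1"
  shows "chain_det (s *\<^sub>R a) (t *\<^sub>R b) (s *\<^sub>R c) (t *\<^sub>R d) * chain_det b c d e
       = chain_det (t *\<^sub>R b) (s *\<^sub>R c) (t *\<^sub>R d) (s *\<^sub>R e) * chain_det a b c d"
proof -
  define P0 N0 P1 N1 where
    "P0 = b \<bullet> cross3 (c - a) d" and "N0 = a \<bullet> cross3 c (d - b)" and
    "P1 = c \<bullet> cross3 (d - b) e" and "N1 = b \<bullet> cross3 d (e - c)"
  have "P0 * P1 = N0 * N1"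
    using chain_det_parts_product[where a=a and b=b and c=c and d=d and e=e and f=f] area
    by (simp add: P0_def N0_def P1_def N1_def)
  moreover have "chain_det a b c d = P0 - N0" "chain_det b c d e = P1 - N1"
    using chain_det_alternating_scale[of 1 1] by (simp_all add: P0_def N0_def P1_def N1_def)
  moreover have "chain_det (s *\<^sub>R a) (t *\<^sub>R b) (s *\<^sub>R c) (t *\<^sub>R d) = t * P0 - s * N0"
    using chain_det_alternating_scale[OF st] by (simp add: P0_def N0_def)
  moreover have "chain_det (t *\<^sub>R b) (s *\<^sub>R c) (t *\<^sub>R d) (s *\<^sub>R e) = s * P1 - t * N1"
    using chain_det_alternating_scale[of t s] st by (simp add: P1_def N1_def mult.commute)
  moreover have "(t * P0 - s * N0) * (P1 - N1) - (s * P1 - t * N1) * (P0 - N0)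
      = (t - s) * (P0 * P1 - N0 * N1)"
    by (simp add: algebra_simps)
  ultimately show ?thesis
    by simp
qed

lemma cross_cross_consecutive:
  "cross3 (cross3 a b) (cross3 b c) = (a \<bullet> cross3 b c) *\<^sub>R b"
  by (simp add: cross3_def inner_vec_def sum_3 vector_def vec_eq_iff forall_3 algebra_simps)

lemma parallel_cross_if_orthogonal:
  fixes x p q :: "real^3"
  assumes "x \<bullet> p = 0" "x \<bullet> q = 0" "cross3 p q \<noteq> 0"
  obtains c where "x = c *\<^sub>R cross3 p q"
proof -
  have "cross3 x (cross3 p q) = 0"
    using assms by (simp add: Lagrange inner_commute)
  then have "collinear {0, cross3 p q, x}"
    by (simp add: cross_eq_0 insert_commute)
  then show ?thesis
    using assms(3) that by (auto simp: collinear_lemma)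
qed

lemma coplanar_insert_0_if_subset_span_2:
  fixes S :: "'a::euclidean_space set"
  assumes "S \<subseteq> span {p, q}"
  shows "coplanar (insert 0 S)"
proof -
  have "affine hull {0, p, q} = span {p, q}"
    by (simp add: affine_hull_span_0 hull_inc)
  then have "insert 0 S \<subseteq> affine hull {0, p, q}"
    using assms span_zero by blast
  then show ?thesis
    unfolding coplanar_def by blast
qed

lemma coplanar_if_dot_cross_eq_0:
  fixes a b c :: "real^3"
  assumes "a \<bullet> cross3 b c = 0"
  shows "coplanar {0, a, b, c}"
proof (cases "cross3 b c = 0")
  case True
  then have "b = 0 \<or> c = 0 \<or> (\<exists>k. c = k *\<^sub>R b)"
    by (simp add: cross_eq_0 collinear_lemma)
  then have "{a, b, c} \<subseteq> span {a, b} \<or> {a, b, c} \<subseteq> span {a, c}"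
    by (auto simp: span_base span_zero span_mul)
  then show ?thesis
    using coplanar_insert_0_if_subset_span_2 by blast
next
  case False
  let ?n = "cross3 b c"
  \<comment> \<open>coordinates of a in the basis b, c, b \<times> c\<close>
  have gram: "(?n \<bullet> ?n) *\<^sub>R a
     = ((a \<bullet> b) * (c \<bullet> c) - (a \<bullet> c) * (b \<bullet> c)) *\<^sub>R b
     + ((a \<bullet> c) * (b \<bullet> b) - (a \<bullet> b) * (b \<bullet> c)) *\<^sub>R c
     + (a \<bullet> ?n) *\<^sub>R ?n"
    by (simp add: cross3_def inner_vec_def sum_3 vector_def vec_eq_iff forall_3 algebra_simps)
  have "(?n \<bullet> ?n) *\<^sub>R a \<in> span {b, c}"
    unfolding gram assms by (simp add: span_add span_mul span_base)
  moreover have "a = inverse (?n \<bullet> ?n) *\<^sub>R ((?n \<bullet> ?n) *\<^sub>R a)"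
    using False by simp
  ultimately have "a \<in> span {b, c}"
    by (metis span_mul)
  then have "{a, b, c} \<subseteq> span {b, c}"
    by (simp add: span_base)
  then show ?thesis
    by (rule coplanar_insert_0_if_subset_span_2)
qed

lemma edge_cong_mod: "i mod 6 = j mod 6 \<Longrightarrow> edge A i = edge A j"
  unfolding edge_def by (metis mod_Suc_eq)

lemma Delta_eq_chain_det:
  "Delta A i = chain_det (A (i mod 6)) (A ((i + 1) mod 6)) (A ((i + 2) mod 6)) (A ((i + 3) mod 6))"
  by (simp add: Delta_def edge_def chain_det_def add.commute)

lemma Delta_cong_mod: "i mod 6 = j mod 6 \<Longrightarrow> Delta A i = Delta A j"
  unfolding Delta_eq_chain_det by (metis mod_Suc_eq mod_add_left_eq)

lemma Delta_hexagon:
  "Delta u 0 = chain_det (u 0) (u 1) (u 2) (u 3)"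
  "Delta u 1 = chain_det (u 1) (u 2) (u 3) (u 4)"
  "Delta u 2 = chain_det (u 2) (u 3) (u 4) (u 5)"
  "Delta u 3 = chain_det (u 3) (u 4) (u 5) (u 0)"
  "Delta u 4 = chain_det (u 4) (u 5) (u 0) (u 1)"
  "Delta u 5 = chain_det (u 5) (u 0) (u 1) (u 2)"
  by (simp_all add: Delta_eq_chain_det flip: One_nat_def)

lemma generic_hex_edge_nonzero: "generic_hex A \<Longrightarrow> edge A i \<noteq> 0"
  unfolding generic_hex_def by (metis collinear_lemma)

lemma generic_hex_cross_edges_nonzero:
  "generic_hex A \<Longrightarrow> cross3 (edge A i) (edge A (Suc i)) \<noteq> 0"
  unfolding generic_hex_def by (simp add: cross_eq_0)

lemma generic_hex_Delta_nonzero: "generic_hex A \<Longrightarrow> Delta A i \<noteq> 0"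
  unfolding generic_hex_def Delta_def using coplanar_if_dot_cross_eq_0 by blast

lemma support_system_orthogonal:
  assumes "support_system A u"
  shows "u (i mod 6) \<bullet> edge A i = 0" "u (i mod 6) \<bullet> edge A (Suc i) = 0"
proof -
  have "cross3 (u (i mod 6)) (u (Suc i mod 6)) = edge A (Suc i)"
    using assms unfolding support_system_def by blast
  then show "u (i mod 6) \<bullet> edge A (Suc i) = 0"
    by (metis dot_cross_self(1))
  have "cross3 (u ((i + 5) mod 6)) (u (Suc (i + 5) mod 6)) = edge A (Suc (i + 5))"
    using assms unfolding support_system_def by blast
  moreover have "Suc (i + 5) mod 6 = i mod 6" and "edge A (Suc (i + 5)) = edge A i"
    by (simp, rule edge_cong_mod, simp)
  ultimately show "u (i mod 6) \<bullet> edge A i = 0"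
    by (metis dot_cross_self(2))
qed

lemma support_system_nonzero:
  assumes "generic_hex A" "support_system A u"
  shows "u (i mod 6) \<noteq> 0"
proof
  assume "u (i mod 6) = 0"
  then have "edge A (Suc i) = 0"
    using assms(2) unfolding support_system_def by (metis cross_zero_left)
  then show False
    using generic_hex_edge_nonzero[OF assms(1)] by blast
qed

lemma support_system_hex_area:
  assumes "support_system A u"
  shows "hex_area (u 0) (u 1) (u 2) (u 3) (u 4) (u 5) = 0"
proof -
  have "cross3 (u (i mod 6)) (u (Suc i mod 6)) = edge A (Suc i)" for i
    using assms unfolding support_system_def by blast
  from this[of 0] this[of 1] this[of 2] this[of 3] this[of 4] this[of 5]
  have "hex_area (u 0) (u 1) (u 2) (u 3) (u 4) (u 5)
      = edge A 1 + edge A 2 + edge A 3 + edge A 4 + edge A 5 + edge A 6"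
    by (simp add: hex_area_def flip: One_nat_def)
  also have "\<dots> = 0"
    by (simp add: edge_def flip: One_nat_def)
  finally show ?thesis .
qed

lemma support_system_opposite_Delta:
  assumes "support_system A u"
  shows "Delta u 0 = Delta u 3" "Delta u 1 = Delta u 4" "Delta u 2 = Delta u 5"
proof -
  have "hex_area (u 0) (u 1) (u 2) (u 3) (u 4) (u 5) = 0"
       "hex_area (u 1) (u 2) (u 3) (u 4) (u 5) (u 0) = 0"
       "hex_area (u 2) (u 3) (u 4) (u 5) (u 0) (u 1) = 0"
    using support_system_hex_area[OF assms] hex_area_rotate by metis+
  then show "Delta u 0 = Delta u 3" "Delta u 1 = Delta u 4" "Delta u 2 = Delta u 5"
    unfolding Delta_hexagon by (simp_all add: chain_det_opposite_eq)
qed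

lemma support_systems_proportional:
  assumes "generic_hex A" "support_system A u" "support_system A w"
  shows "\<exists>r. w (i mod 6) = r *\<^sub>R u (i mod 6)"
proof -
  let ?n = "cross3 (edge A i) (edge A (Suc i))"
  have n: "?n \<noteq> 0"
    using assms(1) by (rule generic_hex_cross_edges_nonzero)
  obtain a where a: "u (i mod 6) = a *\<^sub>R ?n"
    using parallel_cross_if_orthogonal support_system_orthogonal[OF assms(2)] n by metis
  obtain b where b: "w (i mod 6) = b *\<^sub>R ?n"
    using parallel_cross_if_orthogonal support_system_orthogonal[OF assms(3)] n by metis
  have "a \<noteq> 0"
    using a support_system_nonzero[OF assms(1,2)] by auto
  then have "w (i mod 6) = (b / a) *\<^sub>R u (i mod 6)"
    using a b by simp
  then show ?thesis ..
qed

lemma support_systems_ratio_product: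
  assumes "generic_hex A" "support_system A u" "support_system A w"
    and "w (i mod 6) = r *\<^sub>R u (i mod 6)" "w (Suc i mod 6) = r' *\<^sub>R u (Suc i mod 6)"
  shows "r * r' = 1"
proof -
  have "cross3 (u (i mod 6)) (u (Suc i mod 6)) = edge A (Suc i)"
       "cross3 (w (i mod 6)) (w (Suc i mod 6)) = edge A (Suc i)"
    using assms(2,3) unfolding support_system_def by blast+
  then have "(r * r' - 1) *\<^sub>R edge A (Suc i) = 0"
    using assms(4,5) by (simp add: cross_mult_left cross_mult_right algebra_simps)
  then show ?thesis
    using generic_hex_edge_nonzero[OF assms(1)] by simp
qed

lemma support_systems_alternating_scaling:
  assumes "generic_hex A" "support_system A u" "support_system A w"
  obtains s t where "s * t = 1"
    and "\<And>i. w (i mod 6) = (if even i then s else t) *\<^sub>R u (i mod 6)"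
proof -
  obtain r where r: "\<And>i. w (i mod 6) = r i *\<^sub>R u (i mod 6)"
    using support_systems_proportional[OF assms] by metis
  have inv: "r i * r (Suc i) = 1" for i
    using support_systems_ratio_product[OF assms r r] .
  have alternating: "r i = (if even i then r 0 else r 1)" for i
  proof (induction i)
    case (Suc i)
    have "inverse (r i) = r (Suc i)" "inverse (r 0) = r 1" "inverse (r 1) = r 0"
      using inverse_unique[OF inv[of i]] inverse_unique[OF inv[of 0]]
        inverse_unique[of "r 1" "r 0"] inv[of 0] by (simp_all add: mult.commute)
    with Suc.IH show ?case
      by (cases "even i") simp_all
  qed simp
  show ?thesis
  proof (rule that)
    show "r 0 * r 1 = 1"
      using inv[of 0] by simp
    show "w (i mod 6) = (if even i then r 0 else r 1) *\<^sub>R u (i mod 6)" for i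
      using r[of i] alternating[of i] by simp
  qed
qed

lemma support_systems_same_type:
  assumes "generic_hex A" "support_system A u" "support_system A w"
    and "generic_hex u" "generic_hex w"
  shows "same_type (hex_triple u) (hex_triple w)"
proof -
  obtain s t where st: "s * t = 1"
    and scaling: "\<And>i. w (i mod 6) = (if even i then s else t) *\<^sub>R u (i mod 6)"
    using support_systems_alternating_scaling[OF assms(1-3)] by metis
  have w: "w 0 = s *\<^sub>R u 0" "w 1 = t *\<^sub>R u 1" "w 2 = s *\<^sub>R u 2"
          "w 3 = t *\<^sub>R u 3" "w 4 = s *\<^sub>R u 4" "w 5 = t *\<^sub>R u 5"
    using scaling[of 0] scaling[of 1] scaling[of 2] scaling[of 3] scaling[of 4] scaling[of 5]
    by simp_all
  have area: "hex_area (u 0) (u 1) (u 2) (u 3) (u 4) (u 5) = 0"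
    and area': "hex_area (u 1) (u 2) (u 3) (u 4) (u 5) (u 0) = 0"
    using support_system_hex_area[OF assms(2)] hex_area_rotate by metis+
  have ratio01: "Delta w 0 * Delta u 1 = Delta w 1 * Delta u 0"
    unfolding Delta_hexagon w by (rule chain_det_alternating_scale_ratio[OF area st])
  have ratio12: "Delta w 1 * Delta u 2 = Delta w 2 * Delta u 1"
    unfolding Delta_hexagon w
    by (rule chain_det_alternating_scale_ratio[OF area']) (simp add: st mult.commute)
  define c where "c = Delta w 1 / Delta u 1"
  have "Delta u 1 \<noteq> 0" "Delta w 1 \<noteq> 0"
    using assms(4,5) by (simp_all add: generic_hex_Delta_nonzero)
  then have "c \<noteq> 0" "Delta w 0 = c * Delta u 0" "Delta w 1 = c * Delta u 1"
      "Delta w 2 = c * Delta u 2"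
    using ratio01 ratio12 by (simp_all add: c_def field_simps)
  then show ?thesis
    unfolding same_type_def hex_triple_def by auto
qed

lemma support_system_scaled_normals:
  assumes "\<And>i. m (i mod 6) * m (Suc i mod 6) * Delta A i = 1"
  shows "support_system A (\<lambda>i. m i *\<^sub>R cross3 (edge A i) (edge A (Suc i)))"
  unfolding support_system_def
proof
  fix i
  have "edge A (i mod 6) = edge A i" "edge A (Suc (i mod 6)) = edge A (Suc i)"
    "edge A (Suc i mod 6) = edge A (Suc i)" "edge A (Suc (Suc i mod 6)) = edge A (Suc (Suc i))"
    by (rule edge_cong_mod, simp add: mod_Suc_eq)+
  then show "cross3 (m (i mod 6) *\<^sub>R cross3 (edge A (i mod 6)) (edge A (Suc (i mod 6))))
      (m (Suc i mod 6) *\<^sub>R cross3 (edge A (Suc i mod 6)) (edge A (Suc (Suc i mod 6))))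
    = edge A (Suc i)"
    using assms[of i]
    by (simp add: cross_mult_left cross_mult_right cross_cross_consecutive Delta_def mult_ac)
qed

lemma regular_if_opposite_Delta_eq:
  assumes "generic_hex A"
    and "Delta A 0 = Delta A 3" "Delta A 1 = Delta A 4" "Delta A 2 = Delta A 5"
  shows "regular_hex A"
proof -
  \<comment> \<open>the solution of m i * m (i + 1) * Delta A i = 1 with m 0 = 1\<close>
  define m where "m = (!) [1, 1 / Delta A 0, Delta A 0 / Delta A 1,
    Delta A 1 / (Delta A 0 * Delta A 2), Delta A 2 / Delta A 1, 1 / Delta A 2]"
  have "m (i mod 6) * m (Suc i mod 6) * Delta A i = 1" for i
  proof -
    have nonzero: "Delta A 0 \<noteq> 0" "Delta A 1 \<noteq> 0" "Delta A 2 \<noteq> 0"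
      using generic_hex_Delta_nonzero[OF assms(1)] by blast+
    have "m j * m (Suc j mod 6) * Delta A j = 1" if "j < 6" for j
    proof -
      have "j = 0 \<or> j = 1 \<or> j = 2 \<or> j = 3 \<or> j = 4 \<or> j = 5"
        using that by linarith
      then show ?thesis
        using nonzero assms(2-4) by (elim disjE) (simp_all add: m_def flip: One_nat_def)
    qed
    moreover have "Delta A (i mod 6) = Delta A i"
      by (rule Delta_cong_mod) simp
    moreover have "Suc (i mod 6) mod 6 = Suc i mod 6"
      by (rule mod_Suc_eq)
    ultimately show ?thesis
      by (metis mod_less_divisor zero_less_numeral)
  qed
  then show ?thesis
    unfolding regular_hex_def using assms(1) support_system_scaled_normals by blast
qed

theorem theorem5p1:
  fixes A :: "nat \<Rightarrow> real^3"
  assumes "regular_hex A"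
  shows "(\<forall>u. support_system A u \<longrightarrow>
            Delta (derived_hex u) 0 = Delta (derived_hex u) 3 \<and>
            Delta (derived_hex u) 1 = Delta (derived_hex u) 4 \<and>
            Delta (derived_hex u) 2 = Delta (derived_hex u) 5)
       \<and> (\<forall>u. support_system A u \<and> generic_hex (derived_hex u) \<longrightarrow>
            strongly_regular (derived_hex u))
       \<and> (\<forall>u w. support_system A u \<and> generic_hex (derived_hex u) \<and>
                support_system A w \<and> generic_hex (derived_hex w) \<longrightarrow>
            same_type (hex_triple (derived_hex u)) (hex_triple (derived_hex w)))"
proof -
  have generic: "generic_hex A"
    using assms unfolding regular_hex_def by blast
  have opposite: "Delta u 0 = Delta u 3 \<and> Delta u 1 = Delta u 4 \<and> Delta u 2 = Delta u 5"
    if "support_system A u" for u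
    using support_system_opposite_Delta[OF that] by blast
  have "strongly_regular u" if "support_system A u" "generic_hex u" for u
    using opposite[OF that(1)] regular_if_opposite_Delta_eq[OF that(2)]
    unfolding strongly_regular_def by blast
  then show ?thesis
    using opposite support_systems_same_type[OF generic] unfolding derived_hex_def by blast
qed

end
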